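(* Let $m\ge1$, $F(x)=|x^h|^2$ and $G(x)=-x^3$ on $\Omega=\mathbb R^2\times\,]0,1[$. Let $(\widetilde\varrho_\varepsilon)_{0<\varepsilon\le1}$ be a family of positive functions on $\Omega$ solving $\Pi(\widetilde\varrho_\varepsilon(x))=\varepsilon^{2(m-1)}F(x)+\varepsilon^mG(x)$ for all $x\in\Omega$. Then there exist $\varepsilon_0>0$ and $0<\rho_*<1$ such that $\widetilde\varrho_\varepsilon(x)\ge\rho_*$ for all $\varepsilon\in\,]0,\varepsilon_0]$ and all $x\in\Omega$.
   Context: Points of $\Omega$ are $x=(x^h,x^3)$ with $x^h\in\mathbb R^2$. The pressure is $p(\varrho,\vartheta)=\vartheta^{5/2}P(\varrho/\vartheta^{3/2})+\frac a3\vartheta^4$ with $a>0$, where $P\in C^1([0,\infty))\cap C^2(]0,\infty[)$, $P(0)=0$, $P'(Z)>0$ for all $Z\ge0$, $0<\big(\frac53P(Z)-P'(Z)Z\big)/Z<c$ for all $Z>0$, and $\lim_{Z\to+\infty}P(Z)/Z^{5/3}=P_\infty>0$. Fix a constant $\overline\vartheta>0$ and set $\Pi(\varrho):=\int_1^\varrho\frac{\partial_\varrho p(z,\overline\vartheta)}{z}dz$ for $\varrho>0$. *)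

theory Defs
  imports "HOL-Analysis.Analysis"
begin

definition pressure :: "(real \<Rightarrow> real) \<Rightarrow> real \<Rightarrow> real \<Rightarrow> real \<Rightarrow> real" where
  "pressure P a \<rho> \<theta> = \<theta> powr (5/2) * P (\<rho> / \<theta> powr (3/2)) + a / 3 * \<theta> ^ 4"

definition oint :: "real \<Rightarrow> real \<Rightarrow> (real \<Rightarrow> real) \<Rightarrow> real" where
  "oint a b f = (if a \<le> b then integral {a..b} f else - integral {b..a} f)"

definition Pi_fun :: "(real \<Rightarrow> real) \<Rightarrow> real \<Rightarrow> real \<Rightarrow> real \<Rightarrow> real" where
  "Pi_fun P a \<theta>b \<rho> = oint 1 \<rho> (\<lambda>z. deriv (\<lambda>r. pressure P a r \<theta>b) z / z)"

text \<open>Domain Omega = R^2 x ]0,1[, points x = (x^h, x^3).\<close>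
definition Omega :: "((real^2) \<times> real) set" where
  "Omega = UNIV \<times> {0<..<1}"

definition Ffun :: "(real^2) \<times> real \<Rightarrow> real" where
  "Ffun x = (norm (fst x))^2"

definition Gfun :: "(real^2) \<times> real \<Rightarrow> real" where
  "Gfun x = - snd x"

end

theory Submission
  imports Defs
begin

text \<open>Since \<open>\<partial>\<^sub>\<rho>p(z,\<theta>) = \<theta> P'(z / \<theta>^(3/2))\<close> and \<open>P'\<close> attains a positive minimum
  \<open>k\<close> on \<open>[0, \<theta>^(-3/2)]\<close>, for \<open>0 < r \<le> 1\<close> we get
  \<open>\<Pi>(r) = - \<integral>\<^sub>r\<^sup>1 \<partial>\<^sub>\<rho>p(z,\<theta>) / z dz \<le> \<theta> k ln r\<close>, so \<open>\<Pi>(r) \<rightarrow> -\<infinity>\<close> as \<open>r \<rightarrow> 0\<close>.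
  The right-hand side \<open>\<epsilon>^(2(m-1)) F + \<epsilon>^m G\<close> is at least \<open>-1\<close> on \<open>\<Omega>\<close> for \<open>\<epsilon> \<le> 1\<close>,
  which keeps \<open>\<rho>\<close> away from \<open>0\<close>.\<close>

lemma has_integral_inverse_unit_interval:
  fixes r :: real
  assumes "0 < r" "r \<le> 1"
  shows "((\<lambda>z. 1 / z) has_integral (- ln r)) {r..1}"
proof -
  have "((\<lambda>z. 1 / z) has_integral (ln 1 - ln r)) {r..1}"
  proof (rule fundamental_theorem_of_calculus)
    fix z assume "z \<in> {r..1}"
    then have "z > 0" using assms by auto
    then show "(ln has_vector_derivative 1 / z) (at z within {r..1})"
      by (auto intro!: derivative_eq_intros
          simp: has_real_derivative_iff_has_vector_derivative[symmetric])
  qed (use assms in simp)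
  then show ?thesis by simp
qed

lemma oint_le_ln:
  fixes f :: "real \<Rightarrow> real"
  assumes "0 < r" "r \<le> 1" "f integrable_on {r..1}"
    and "\<And>z. z \<in> {r..1} \<Longrightarrow> k / z \<le> f z"
  shows "oint 1 r f \<le> k * ln r"
proof -
  have ln_int: "((\<lambda>z. k * (1 / z)) has_integral k * (- ln r)) {r..1}"
    using has_integral_inverse_unit_interval[OF assms(1,2)] by (rule has_integral_mult_right)
  have "k * (- ln r) \<le> integral {r..1} f"
    by (rule has_integral_le[OF ln_int integrable_integral[OF assms(3)]]) (use assms(4) in simp)
  moreover have "oint 1 r f = - integral {r..1} f"
    using assms(2) by (cases "r = 1") (auto simp: oint_def)
  ultimately show ?thesis by simp
qed

lemma deriv_pressure:
  assumes "\<theta> > 0" and "(P has_real_derivative D) (at (z / \<theta> powr (3/2)))"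
  shows "deriv (\<lambda>r. pressure P a r \<theta>) z = \<theta> * D"
proof -
  define s where "s = \<theta> powr (3/2)"
  have "s > 0" using assms(1) by (simp add: s_def)
  have "((\<lambda>r. P (r / s)) has_real_derivative D * (1 / s)) (at z)"
    using assms(2) unfolding s_def[symmetric]
    by (rule DERIV_chain2) (use \<open>s > 0\<close> in \<open>auto intro!: derivative_eq_intros\<close>)
  then have has_deriv:
    "((\<lambda>r. pressure P a r \<theta>) has_real_derivative \<theta> powr (5/2) * (D * (1 / s))) (at z)"
    unfolding pressure_def s_def[symmetric] by (auto intro!: derivative_eq_intros)
  have "\<theta> powr (5/2) * (D * (1 / s)) = (\<theta> powr (5/2) / s) * D" by simp
  also have "\<dots> = \<theta> * D" using assms(1) by (simp add: s_def powr_diff[symmetric])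
  finally show ?thesis using has_deriv by (simp add: DERIV_imp_deriv)
qed

lemma Pi_fun_le_ln:
  fixes P P' :: "real \<Rightarrow> real"
  assumes "\<theta> > 0"
    and P_deriv: "\<And>Z. Z > 0 \<Longrightarrow> (P has_real_derivative P' Z) (at Z)"
    and P'_cont: "continuous_on {0..} P'"
    and P'_pos: "\<And>Z. Z \<ge> 0 \<Longrightarrow> P' Z > 0"
  obtains K where "K > 0" "\<And>r. 0 < r \<Longrightarrow> r \<le> 1 \<Longrightarrow> Pi_fun P a \<theta> r \<le> K * ln r"
proof -
  define s where "s = \<theta> powr (3/2)"
  have "s > 0" using \<open>\<theta> > 0\<close> by (simp add: s_def)
  have "continuous_on {0..1/s} P'" using P'_cont by (rule continuous_on_subset) auto
  then obtain z0 where "z0 \<in> {0..1/s}" and z0_min: "\<And>y. y \<in> {0..1/s} \<Longrightarrow> P' z0 \<le> P' y"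
    using continuous_attains_inf[of "{0..1/s}" P'] \<open>s > 0\<close> by auto
  define k where "k = P' z0"
  have "k > 0" using \<open>z0 \<in> {0..1/s}\<close> P'_pos by (simp add: k_def)
  define f where "f z = deriv (\<lambda>r. pressure P a r \<theta>) z / z" for z
  have f_eq: "f z = \<theta> * P' (z / s) / z" if "z > 0" for z
    using deriv_pressure[OF \<open>\<theta> > 0\<close> P_deriv] that \<open>s > 0\<close> by (simp add: f_def s_def)
  have "Pi_fun P a \<theta> r \<le> (\<theta> * k) * ln r" if "0 < r" "r \<le> 1" for r
    unfolding Pi_fun_def f_def[symmetric]
  proof (rule oint_le_ln[OF that])
    have "continuous_on {r..1} (\<lambda>z. \<theta> * P' (z / s) / z)"
      using \<open>0 < r\<close> \<open>s > 0\<close>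
      by (auto intro!: continuous_intros continuous_on_compose2[OF P'_cont] simp: divide_nonneg_pos)
    then show "f integrable_on {r..1}"
      by (rule integrable_eq[OF integrable_continuous_interval]) (use \<open>0 < r\<close> f_eq in auto)
  next
    fix z assume z: "z \<in> {r..1}"
    then have "z / s \<in> {0..1/s}" using \<open>0 < r\<close> \<open>s > 0\<close> by (auto simp: divide_right_mono)
    then have "\<theta> * k \<le> \<theta> * P' (z / s)"
      using z0_min \<open>\<theta> > 0\<close> by (simp add: k_def)
    then show "\<theta> * k / z \<le> f z" using z \<open>0 < r\<close> f_eq by (simp add: divide_right_mono)
  qed
  then show ?thesis using \<open>\<theta> > 0\<close> \<open>k > 0\<close> by (intro that[of "\<theta> * k"]) auto
qed

lemma source_term_ge_neg_one:
  assumes "0 < \<epsilon>" "\<epsilon> \<le> 1" "m \<ge> 0" "x \<in> Omega"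
  shows "\<epsilon> powr n * Ffun x + \<epsilon> powr m * Gfun x \<ge> -1"
proof -
  have "\<epsilon> powr m \<le> 1" by (rule powr_le1) (use assms in auto)
  moreover have "0 < snd x" "snd x < 1" using assms(4) by (auto simp: Omega_def)
  ultimately have "\<epsilon> powr m * snd x \<le> 1" by (simp add: mult_le_one)
  moreover have "\<epsilon> powr n * Ffun x \<ge> 0" by (simp add: Ffun_def)
  ultimately show ?thesis by (simp add: Gfun_def)
qed

theorem lemma2p2:
  fixes P P' P'' :: "real \<Rightarrow> real" and a c Pinf \<theta>b m :: real
    and \<rho> :: "real \<Rightarrow> (real^2) \<times> real \<Rightarrow> real"
  assumes a_pos: "a > 0"
    and thb_pos: "\<theta>b > 0"
    and P_cont: "continuous_on {0..} P"
    and P_deriv: "\<And>Z. Z \<ge> 0 \<Longrightarrow> (P has_real_derivative P' Z) (at Z within {0..})"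
    and P'_cont: "continuous_on {0..} P'"
    and P'_deriv: "\<And>Z. Z > 0 \<Longrightarrow> (P' has_real_derivative P'' Z) (at Z)"
    and P''_cont: "continuous_on {0<..} P''"
    and P0: "P 0 = 0"
    and P'_pos: "\<And>Z. Z \<ge> 0 \<Longrightarrow> P' Z > 0"
    and P_bounds: "\<And>Z. Z > 0 \<Longrightarrow> 0 < (5/3 * P Z - P' Z * Z) / Z \<and> (5/3 * P Z - P' Z * Z) / Z < c"
    and P_lim: "((\<lambda>Z. P Z / Z powr (5/3)) \<longlongrightarrow> Pinf) at_top"
    and Pinf_pos: "Pinf > 0"
    and m_ge: "m \<ge> 1"
    and rho_pos: "\<And>\<epsilon> x. 0 < \<epsilon> \<Longrightarrow> \<epsilon> \<le> 1 \<Longrightarrow> x \<in> Omega \<Longrightarrow> \<rho> \<epsilon> x > 0"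
    and rho_eq: "\<And>\<epsilon> x. 0 < \<epsilon> \<Longrightarrow> \<epsilon> \<le> 1 \<Longrightarrow> x \<in> Omega \<Longrightarrow>
        Pi_fun P a \<theta>b (\<rho> \<epsilon> x) = \<epsilon> powr (2 * (m - 1)) * Ffun x + \<epsilon> powr m * Gfun x"
  shows "\<exists>\<epsilon>0 > 0. \<exists>\<rho>s. 0 < \<rho>s \<and> \<rho>s < 1 \<and>
           (\<forall>\<epsilon>\<in>{0<..\<epsilon>0}. \<forall>x\<in>Omega. \<rho> \<epsilon> x \<ge> \<rho>s)"
proof -
  have P_deriv_at: "(P has_real_derivative P' Z) (at Z)" if "Z > 0" for Z
    using P_deriv[of Z] at_within_interior[of Z "{0..}"] that by simp
  obtain K where "K > 0" and Pi_le: "\<And>r. 0 < r \<Longrightarrow> r \<le> 1 \<Longrightarrow> Pi_fun P a \<theta>b r \<le> K * ln r"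
    using Pi_fun_le_ln[where a = a, OF thb_pos P_deriv_at P'_cont P'_pos] by blast
  define \<rho>s where "\<rho>s = exp (- 1 / K)"
  have "0 < \<rho>s" "\<rho>s < 1" using \<open>K > 0\<close> by (auto simp: \<rho>s_def)
  moreover have "\<rho> \<epsilon> x \<ge> \<rho>s" if "\<epsilon> \<in> {0<..1}" "x \<in> Omega" for \<epsilon> x
  proof (rule ccontr)
    assume "\<not> \<rho> \<epsilon> x \<ge> \<rho>s"
    then have "0 < \<rho> \<epsilon> x" "\<rho> \<epsilon> x < \<rho>s" using rho_pos that by auto
    then have "ln (\<rho> \<epsilon> x) < ln \<rho>s" using \<open>0 < \<rho>s\<close> by simp
    then have "ln (\<rho> \<epsilon> x) < - 1 / K" by (simp add: \<rho>s_def)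
    then have "K * ln (\<rho> \<epsilon> x) < K * (- 1 / K)" using \<open>K > 0\<close> by (rule mult_strict_left_mono)
    then have "K * ln (\<rho> \<epsilon> x) < -1" using \<open>K > 0\<close> by simp
    moreover have "Pi_fun P a \<theta>b (\<rho> \<epsilon> x) \<le> K * ln (\<rho> \<epsilon> x)"
      using \<open>0 < \<rho> \<epsilon> x\<close> \<open>\<rho> \<epsilon> x < \<rho>s\<close> \<open>\<rho>s < 1\<close> by (intro Pi_le) auto
    moreover have "Pi_fun P a \<theta>b (\<rho> \<epsilon> x) = \<epsilon> powr (2 * (m - 1)) * Ffun x + \<epsilon> powr m * Gfun x"
      using rho_eq that by auto
    moreover have "\<epsilon> powr (2 * (m - 1)) * Ffun x + \<epsilon> powr m * Gfun x \<ge> -1"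
      using source_term_ge_neg_one[of \<epsilon> m x] m_ge that by auto
    ultimately show False by linarith
  qed
  ultimately show ?thesis by (intro exI[of _ 1] exI[of _ \<rho>s]) auto
qed

end
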